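(* $\mathtt{incl}$-$\mathtt{ESO}$-$\mathtt{HORN}=\mathtt{Trellis}$.
   Context: Fix a finite alphabet $\Sigma$. A nonempty word $w=w_1\cdots w_n$ is represented by the structure $\langle w\rangle=([1,n];(Q_s)_{s\in\Sigma},\mathtt{min},\mathtt{max},\mathtt{suc},\mathtt{pred})$ with $Q_s(i)\iff w_i=s$, $\mathtt{min}(i)\iff i=1$, $\mathtt{max}(i)\iff i=n$, $\mathtt{suc}(i)=\min(i+1,n)$, $\mathtt{pred}(i)=\max(i-1,1)$. For an integer $a$, $x+a$ denotes $\mathtt{suc}^a(x)$ if $a\ge0$ and $\mathtt{pred}^{-a}(x)$ if $a<0$; $y-b=\mathtt{pred}^b(y)$. An inclusion Horn formula is $\Phi=\exists\mathbf{R}\forall x\forall y\,\psi(x,y)$, $\mathbf{R}$ a finite set of binary relation symbols, $\psi$ a conjunction of Horn clauses over the signature $\{(Q_s)_{s\in\Sigma},\mathtt{min},\mathtt{max},\mathtt{suc},\mathtt{pred}\}\cup\mathbf{R}\cup\{=,\le,<\}$, each of the form $x\le y\wedge\delta_1\wedge\cdots\wedge\delta_r\to\delta_0$ with $\delta_0$ an atom $R(x,y)$ ($R\in\mathbf{R}$) or $\bot$, and each $\delta_i$ one of: $U(x+a)$, $\neg U(x+a)$, $U(y+a)$, $\neg U(y+a)$ for $U\in\{(Q_s)_{s\in\Sigma},\mathtt{min},\mathtt{max}\}$ and $a\in\mathbb Z$; $x=y$ or $x<y$; a conjunction $S(x+a,y-b)\wedge x+a\le y-b$ with $S\in\mathbf{R}$,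 integers $a,b\ge0$. $\mathtt{incl}$-$\mathtt{ESO}$-$\mathtt{HORN}$ is the class of languages $\{w\in\Sigma^+:\langle w\rangle\models\Phi\}$ for such $\Phi$. A one-way cellular automaton (OCA) is $(Q,\Sigma,Q_{accept},\mathcal N,\delta)$ with finite $Q\supseteq\Sigma$, $Q_{accept}\subseteq Q$, $\mathcal N=\{-1,0\}$, $\delta:Q^2\to Q$. On input $w=w_1\cdots w_n$ it works on cells $1,\dots,n$ (cells outside are permanently in a state $\sharp$), with parallel input $\langle c,1\rangle=w_c$ and $\langle c,t\rangle=\delta(\langle c-1,t-1\rangle,\langle c,t-1\rangle)$ for $t>1$, where $\langle c,t\rangle$ is the state of cell $c$ at time $t$. $\mathtt{Trellis}$ is the class of languages $L\subseteq\Sigma^+$ accepted in real time by such an automaton, i.e. such that $w\in L\iff\langle n,n\rangle\in Q_{accept}$ for every $w$ of length $n$ (equivalently, languages accepted by trellis automata). *)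

theory Defs
  imports Main
begin

text \<open>A nonempty word w of length n is viewed as the structure on positions 1..n.
  Positions are natural numbers; w_i is  w ! (i - 1).\<close>

definition suc_w :: "nat \<Rightarrow> nat \<Rightarrow> nat" where
  "suc_w n i = min (i + 1) n"

definition pred_w :: "nat \<Rightarrow> nat" where
  "pred_w i = max (i - 1) 1"

definition shift :: "nat \<Rightarrow> nat \<Rightarrow> int \<Rightarrow> nat" where
  "shift n x a = (if a \<ge> 0 then (suc_w n ^^ nat a) x else (pred_w ^^ nat (- a)) x)"

definition minus_w :: "nat \<Rightarrow> nat \<Rightarrow> nat" where
  "minus_w y b = (pred_w ^^ b) y"

datatype 's upred = Qs 's | MinP | MaxP

datatype fovar = VX | VY

text \<open>Hypothesis literals delta_i (i >= 1):
  ULit True U v a  is  U(v+a);  ULit False U v a  is  \<not>U(v+a);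
  XeqY is x = y; XltY is x < y;
  RLit S a b  is  S(x+a, y-b) \<and> x+a \<le> y-b  with a, b >= 0 (natural numbers).\<close>
datatype 's hlit =
    ULit bool "'s upred" fovar int
  | XeqY
  | XltY
  | RLit nat nat nat

datatype hhead = HRel nat | HBot

type_synonym 's hclause = "'s hlit list \<times> hhead"

text \<open>The first-order part psi: a (finite) conjunction of Horn clauses.
  Each clause (ls, h) stands for  x \<le> y \<and> /\ ls \<longrightarrow> h.\<close>
type_synonym 's incl_horn = "'s hclause list"

definition upred_holds :: "'s list \<Rightarrow> 's upred \<Rightarrow> nat \<Rightarrow> bool" where
  "upred_holds w U i = (case U of
      Qs s \<Rightarrow> w ! (i - 1) = s
    | MinP \<Rightarrow> i = 1
    | MaxP \<Rightarrow> i = length w)"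

fun hlit_holds :: "'s list \<Rightarrow> (nat \<Rightarrow> nat \<Rightarrow> nat \<Rightarrow> bool) \<Rightarrow> nat \<Rightarrow> nat \<Rightarrow> 's hlit \<Rightarrow> bool" where
  "hlit_holds w I x y (ULit pos U v a) =
     (let p = shift (length w) (case v of VX \<Rightarrow> x | VY \<Rightarrow> y) a
      in if pos then upred_holds w U p else \<not> upred_holds w U p)"
| "hlit_holds w I x y XeqY = (x = y)"
| "hlit_holds w I x y XltY = (x < y)"
| "hlit_holds w I x y (RLit S a b) =
     (I S (shift (length w) x (int a)) (minus_w y b) \<and>
      shift (length w) x (int a) \<le> minus_w y b)"

fun hhead_holds :: "(nat \<Rightarrow> nat \<Rightarrow> nat \<Rightarrow> bool) \<Rightarrow> nat \<Rightarrow> nat \<Rightarrow> hhead \<Rightarrow> bool" where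
  "hhead_holds I x y (HRel R) = I R x y"
| "hhead_holds I x y HBot = False"

definition hclause_holds :: "'s list \<Rightarrow> (nat \<Rightarrow> nat \<Rightarrow> nat \<Rightarrow> bool) \<Rightarrow> nat \<Rightarrow> nat \<Rightarrow> 's hclause \<Rightarrow> bool" where
  "hclause_holds w I x y C =
     (x \<le> y \<and> (\<forall>l \<in> set (fst C). hlit_holds w I x y l) \<longrightarrow> hhead_holds I x y (snd C))"

text \<open>\<langle>w\<rangle> \<Turnstile> \<exists>R \<forall>x \<forall>y psi(x,y).  I interprets the relation symbols
  (binary relations on positions; only their values on 1..n matter).\<close>
definition incl_horn_models :: "'s list \<Rightarrow> 's incl_horn \<Rightarrow> bool" where
  "incl_horn_models w \<Phi> =
     (\<exists>I :: nat \<Rightarrow> nat \<Rightarrow> nat \<Rightarrow> bool.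
        \<forall>x y. 1 \<le> x \<and> x \<le> length w \<and> 1 \<le> y \<and> y \<le> length w \<longrightarrow>
          (\<forall>C \<in> set \<Phi>. hclause_holds w I x y C))"

definition incl_horn_lang :: "'s incl_horn \<Rightarrow> 's list set" where
  "incl_horn_lang \<Phi> = {w. w \<noteq> [] \<and> incl_horn_models w \<Phi>}"

definition incl_ESO_HORN :: "('s::finite) list set set" where
  "incl_ESO_HORN = {L. \<exists>\<Phi>. L = incl_horn_lang \<Phi>}"

text \<open>States are of type 's + nat so that the alphabet (embedded by Inl) is a
  subset of the state set Q.  oca_state delta sh w c t is the state of cell c at
  time t (both 1-based); cell 0 (left of cell 1) is permanently in state sh.\<close>
fun oca_state :: "('q \<Rightarrow> 'q \<Rightarrow> 'q) \<Rightarrow> 'q \<Rightarrow> ('s \<Rightarrow> 'q) \<Rightarrow> 's list \<Rightarrow> nat \<Rightarrow> nat \<Rightarrow> 'q" where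
  "oca_state \<delta> sh inp w c 0 = sh"
| "oca_state \<delta> sh inp w c (Suc 0) = (if 1 \<le> c \<and> c \<le> length w then inp (w ! (c - 1)) else sh)"
| "oca_state \<delta> sh inp w c (Suc (Suc t)) =
     (if 1 \<le> c \<and> c \<le> length w then
        \<delta> (oca_state \<delta> sh inp w (c - 1) (Suc t)) (oca_state \<delta> sh inp w c (Suc t))
      else sh)"

definition Trellis :: "('s::finite) list set set" where
  "Trellis = {L. L \<subseteq> {w. w \<noteq> []} \<and>
     (\<exists>(Q :: ('s + nat) set) Qacc sh \<delta>.
        finite Q \<and> range Inl \<subseteq> Q \<and> sh \<notin> Q \<and> Qacc \<subseteq> Q \<and>
        (\<forall>q \<in> insert sh Q. \<forall>q' \<in> Q. \<delta> q q' \<in> Q) \<and>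
        (\<forall>w. w \<noteq> [] \<longrightarrow>
           (w \<in> L \<longleftrightarrow> oca_state \<delta> sh Inl w (length w) (length w) \<in> Qacc)))}"

end

theory Submission
  imports Defs
begin

text \<open>Both inclusions are simulations.  A trellis automaton is simulated by a formula
  whose relation R_q(x,y) says that the automaton run on the factor w[x..y] ends in state q:
  one clause per letter, one per transition, R_p(x,y-1) \<and> R_q(x+1,y) \<longrightarrow> R_(\<delta> p q)(x,y),
  and one rejecting the full span for each non-accepting state.
  Conversely, an inclusion Horn formula has a least model, and every clause looks only at
  bounded offsets from x and y.  Hence the facts R(x,y) derivable near the two ends of a factor
  u, and the violations inside u, depend only on a bounded summary of u: its first and last K
  letters, the facts derivable near its ends in every context of length at most K, and the
  contexts admitting a violation.  The summary of u is determined by the summaries of its two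
  maximal proper factors, which is exactly what a trellis automaton can combine in one step.\<close>

section \<open>Positions and the least model\<close>

lemma suc_w_funpow: "p \<le> n \<Longrightarrow> (suc_w n ^^ k) p = min (p + k) n"
  by (induction k) (auto simp: suc_w_def)

lemma pred_w_funpow: "1 \<le> p \<Longrightarrow> (pred_w ^^ k) p = max (p - k) 1"
  by (induction k) (auto simp: pred_w_def)

lemma shift_nonneg: "p \<le> n \<Longrightarrow> 0 \<le> a \<Longrightarrow> shift n p a = min (p + nat a) n"
  by (simp add: shift_def suc_w_funpow)

lemma shift_neg: "1 \<le> p \<Longrightarrow> a < 0 \<Longrightarrow> shift n p a = max (p - nat (- a)) 1"
  by (simp add: shift_def pred_w_funpow)

lemma minus_w_eq: "1 \<le> y \<Longrightarrow> minus_w y b = max (y - b) 1"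
  by (simp add: minus_w_def pred_w_funpow)

lemma minus_w_eq_shift: "1 \<le> y \<Longrightarrow> y \<le> n \<Longrightarrow> minus_w y b = shift n y (- int b)"
  by (cases "b = 0") (simp_all add: minus_w_def shift_nonneg shift_neg pred_w_funpow)

text \<open>Under the trivial interpretation a relation atom S(x+a, y-b) \<and> x+a \<le> y-b of a body
  reduces to its position constraint x+a \<le> y-b.\<close>

definition body_guard :: "'s list \<Rightarrow> nat \<Rightarrow> nat \<Rightarrow> 's hlit list \<Rightarrow> bool" where
  "body_guard w x y ls = (\<forall>l\<in>set ls. hlit_holds w (\<lambda>_ _ _. True) x y l)"

definition body_rels :: "(nat \<Rightarrow> nat \<Rightarrow> nat \<Rightarrow> bool) \<Rightarrow> nat \<Rightarrow> nat \<Rightarrow> nat \<Rightarrow> 's hlit list \<Rightarrow> bool" where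
  "body_rels I n x y ls = (\<forall>S a b. RLit S a b \<in> set ls \<longrightarrow> I S (shift n x (int a)) (minus_w y b))"

lemma hlits_hold_iff:
  "(\<forall>l\<in>set ls. hlit_holds w I x y l) \<longleftrightarrow> body_guard w x y ls \<and> body_rels I (length w) x y ls"
proof -
  have "hlit_holds w I x y l \<longleftrightarrow> hlit_holds w (\<lambda>_ _ _. True) x y l \<and>
      (\<forall>S a b. l = RLit S a b \<longrightarrow> I S (shift (length w) x (int a)) (minus_w y b))" for l
    by (cases l) auto
  then show ?thesis
    unfolding body_guard_def body_rels_def by blast
qed

lemma rel_atom_between:
  assumes "body_guard w x y ls" "RLit S a b \<in> set ls" "1 \<le> x" "x \<le> y" "y \<le> length w"
  shows "x \<le> shift (length w) x (int a)" "shift (length w) x (int a) \<le> minus_w y b" "minus_w y b \<le> y"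
  using assms by (auto simp: body_guard_def shift_nonneg minus_w_eq)

text \<open>Horn clauses have a least model; the formula holds iff that model violates no clause
  with head \<bottom>.\<close>

inductive least_model :: "'s incl_horn \<Rightarrow> 's list \<Rightarrow> nat \<Rightarrow> nat \<Rightarrow> nat \<Rightarrow> bool"
  for \<Phi> :: "'s incl_horn" and w :: "'s list" where
  least_modelI: "(ls, HRel R) \<in> set \<Phi> \<Longrightarrow> 1 \<le> x \<Longrightarrow> x \<le> y \<Longrightarrow> y \<le> length w \<Longrightarrow>
    body_guard w x y ls \<Longrightarrow>
    (\<forall>S a b. RLit S a b \<in> set ls \<longrightarrow> least_model \<Phi> w S (shift (length w) x (int a)) (minus_w y b)) \<Longrightarrow>
    least_model \<Phi> w R x y"

definition violation :: "'s incl_horn \<Rightarrow> 's list \<Rightarrow> nat \<Rightarrow> nat \<Rightarrow> bool" where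
  "violation \<Phi> w x y = (1 \<le> x \<and> x \<le> y \<and> y \<le> length w \<and>
     (\<exists>ls. (ls, HBot) \<in> set \<Phi> \<and> body_guard w x y ls \<and> body_rels (least_model \<Phi> w) (length w) x y ls))"

lemma violation_range: "violation \<Phi> w x y \<Longrightarrow> 1 \<le> x \<and> x \<le> y \<and> y \<le> length w"
  unfolding violation_def by blast

lemma least_model_head: "least_model \<Phi> w R x y \<Longrightarrow> \<exists>ls. (ls, HRel R) \<in> set \<Phi>"
  by (induction rule: least_model.induct) auto

lemma least_model_le:
  assumes I: "\<forall>x y. 1 \<le> x \<and> x \<le> length w \<and> 1 \<le> y \<and> y \<le> length w \<longrightarrow>
    (\<forall>C \<in> set \<Phi>. hclause_holds w I x y C)"
  shows "least_model \<Phi> w R x y \<Longrightarrow> I R x y"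
proof (induction rule: least_model.induct)
  case (least_modelI ls R x y)
  then have "body_rels I (length w) x y ls"
    unfolding body_rels_def by blast
  then have "\<forall>l\<in>set ls. hlit_holds w I x y l"
    using least_modelI.hyps hlits_hold_iff by blast
  moreover have "hclause_holds w I x y (ls, HRel R)"
    using I least_modelI.hyps by auto
  ultimately show ?case
    using least_modelI.hyps unfolding hclause_holds_def by auto
qed

lemma incl_horn_models_iff_no_violation:
  "incl_horn_models w \<Phi> \<longleftrightarrow> \<not> (\<exists>x y. violation \<Phi> w x y)"
proof
  assume "incl_horn_models w \<Phi>"
  then obtain I where I: "\<forall>x y. 1 \<le> x \<and> x \<le> length w \<and> 1 \<le> y \<and> y \<le> length w \<longrightarrow>
      (\<forall>C \<in> set \<Phi>. hclause_holds w I x y C)"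
    unfolding incl_horn_models_def by blast
  show "\<not> (\<exists>x y. violation \<Phi> w x y)"
  proof
    assume "\<exists>x y. violation \<Phi> w x y"
    then obtain x y ls where v: "1 \<le> x" "x \<le> y" "y \<le> length w" "(ls, HBot) \<in> set \<Phi>"
      "body_guard w x y ls" "body_rels (least_model \<Phi> w) (length w) x y ls"
      unfolding violation_def by blast
    have "body_rels I (length w) x y ls"
      using v(6) least_model_le[OF I] unfolding body_rels_def by blast
    then have "\<forall>l\<in>set ls. hlit_holds w I x y l"
      using v hlits_hold_iff by blast
    moreover have "hclause_holds w I x y (ls, HBot)"
      using I v by auto
    ultimately show False
      using v unfolding hclause_holds_def by auto
  qed
next
  assume no_violation: "\<not> (\<exists>x y. violation \<Phi> w x y)"
  have "hclause_holds w (least_model \<Phi> w) x y (ls, h)"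
    if "1 \<le> x" "y \<le> length w" "(ls, h) \<in> set \<Phi>" for x y ls h
  proof (cases h)
    case (HRel R)
    with that show ?thesis
      unfolding hclause_holds_def hlits_hold_iff body_rels_def
      by (auto intro: least_modelI)
  next
    case HBot
    with that no_violation show ?thesis
      unfolding hclause_holds_def hlits_hold_iff violation_def by auto
  qed
  then show "incl_horn_models w \<Phi>"
    unfolding incl_horn_models_def by fastforce
qed

lemma least_model_transfer:
  assumes range: "\<And>x y. (x, y) \<in> P \<Longrightarrow> 1 \<le> f x \<and> f x \<le> f y \<and> f y \<le> length w'"
    and guard: "\<And>x y ls h. (x, y) \<in> P \<Longrightarrow> (ls, h) \<in> set \<Phi> \<Longrightarrow> body_guard w x y ls \<Longrightarrow>
      body_guard w' (f x) (f y) ls"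
    and commute: "\<And>x y ls h S a b. (x, y) \<in> P \<Longrightarrow> (ls, h) \<in> set \<Phi> \<Longrightarrow> body_guard w x y ls \<Longrightarrow>
      RLit S a b \<in> set ls \<Longrightarrow>
      shift (length w') (f x) (int a) = f (shift (length w) x (int a)) \<and> minus_w (f y) b = f (minus_w y b)"
    and outside: "\<And>x y ls h S a b. (x, y) \<in> P \<Longrightarrow> (ls, h) \<in> set \<Phi> \<Longrightarrow> body_guard w x y ls \<Longrightarrow>
      RLit S a b \<in> set ls \<Longrightarrow> (shift (length w) x (int a), minus_w y b) \<notin> P \<Longrightarrow>
      least_model \<Phi> w S (shift (length w) x (int a)) (minus_w y b) \<Longrightarrow>
      least_model \<Phi> w' S (f (shift (length w) x (int a))) (f (minus_w y b))"
  shows "least_model \<Phi> w R x y \<Longrightarrow> (x, y) \<in> P \<Longrightarrow> least_model \<Phi> w' R (f x) (f y)"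
proof (induction rule: least_model.induct)
  case (least_modelI ls R x y)
  note hyps = least_modelI.hyps(1,5) and xy = least_modelI.prems
  show ?case
  proof (rule least_model.least_modelI[OF hyps(1)])
    show "1 \<le> f x" "f x \<le> f y" "f y \<le> length w'"
      using range[OF xy] by auto
    show "body_guard w' (f x) (f y) ls"
      using guard[OF xy hyps] .
    show "\<forall>S a b. RLit S a b \<in> set ls \<longrightarrow>
        least_model \<Phi> w' S (shift (length w') (f x) (int a)) (minus_w (f y) b)"
    proof (intro allI impI)
      fix S a b assume Sab: "RLit S a b \<in> set ls"
      then show "least_model \<Phi> w' S (shift (length w') (f x) (int a)) (minus_w (f y) b)"
        using least_modelI.IH commute[OF xy hyps Sab] outside[OF xy hyps Sab]
        by (cases "(shift (length w) x (int a), minus_w y b) \<in> P") auto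
    qed
  qed
qed

section \<open>Trellis languages from finite summaries\<close>

lemma oca_state_closed:
  assumes closed: "\<forall>q \<in> insert sh Q. \<forall>q' \<in> Q. \<delta> q q' \<in> Q" and inp: "range inp \<subseteq> Q"
    and c: "1 \<le> c" "c \<le> length w"
  shows "oca_state \<delta> sh inp w c (Suc t) \<in> Q"
proof -
  have "oca_state \<delta> sh inp w c (Suc t) \<in> insert sh Q \<and>
      (1 \<le> c \<and> c \<le> length w \<longrightarrow> oca_state \<delta> sh inp w c (Suc t) \<in> Q)" for c
  proof (induction t arbitrary: c)
    case (Suc t)
    show ?case
    proof (cases "1 \<le> c \<and> c \<le> length w")
      case True
      then have "\<delta> (oca_state \<delta> sh inp w (c - 1) (Suc t)) (oca_state \<delta> sh inp w c (Suc t)) \<in> Q"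
        using closed Suc.IH[of "c - 1"] Suc.IH[of c] by blast
      with True show ?thesis
        by simp
    qed auto
  qed (use inp in auto)
  then show ?thesis
    using c by blast
qed

lemma oca_state_summary:
  assumes letter: "\<And>a. val (inp a) = F [a]"
    and step: "\<And>u p q. 2 \<le> length u \<Longrightarrow> val p = F (butlast u) \<Longrightarrow> val q = F (tl u) \<Longrightarrow>
      val (\<delta> p q) = F u"
  shows "Suc t \<le> c \<Longrightarrow> c \<le> length w \<Longrightarrow>
    val (oca_state \<delta> sh inp w c (Suc t)) = F (take (Suc t) (drop (c - Suc t) w))"
proof (induction t arbitrary: c)
  case 0
  then have "take (Suc 0) (drop (c - Suc 0) w) = [w ! (c - 1)]"
    by (simp add: take_Suc_conv_app_nth)
  with 0 show ?case
    using letter by simp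
next
  case (Suc t)
  define u where "u = take (Suc (Suc t)) (drop (c - Suc (Suc t)) w)"
  have "butlast u = take (Suc t) (drop (c - 1 - Suc t) w)"
    unfolding u_def using Suc.prems by (simp add: butlast_take)
  then have left: "val (oca_state \<delta> sh inp w (c - 1) (Suc t)) = F (butlast u)"
    using Suc by simp
  have "c - Suc t = Suc (c - Suc (Suc t))"
    using Suc.prems by simp
  then have "tl u = take (Suc t) (drop (c - Suc t) w)"
    unfolding u_def by (simp add: tl_take tl_drop drop_Suc)
  then have right: "val (oca_state \<delta> sh inp w c (Suc t)) = F (tl u)"
    using Suc by simp
  have "length u = Suc (Suc t)"
    unfolding u_def using Suc.prems by simp
  then show ?case
    using step[OF _ left right] Suc.prems unfolding u_def by simp
qed

lemma Trellis_if_final_state_summary: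
  fixes L :: "('s::finite) list set" and Q :: "('s + nat) set"
  assumes nonempty: "L \<subseteq> {w. w \<noteq> []}"
    and saturated: "\<And>w w'. w \<noteq> [] \<Longrightarrow> w' \<noteq> [] \<Longrightarrow> F w = F w' \<Longrightarrow> w \<in> L \<Longrightarrow> w' \<in> L"
    and Q: "finite Q" "range Inl \<subseteq> Q" "sh \<notin> Q"
    and closed: "\<forall>q \<in> insert sh Q. \<forall>q' \<in> Q. \<delta> q q' \<in> Q"
    and state: "\<And>w. w \<noteq> [] \<Longrightarrow> val (oca_state \<delta> sh Inl w (length w) (length w)) = F w"
  shows "L \<in> Trellis"
proof -
  define Qacc where "Qacc = {q \<in> Q. \<exists>w\<in>L. val q = F w}"
  have final_state: "oca_state \<delta> sh Inl w (length w) (length w) \<in> Q" if "w \<noteq> []" for w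
    using oca_state_closed[OF closed Q(2), of "length w" w "length w - 1"] that
    by (simp add: Suc_leI)
  have "w \<in> L \<longleftrightarrow> oca_state \<delta> sh Inl w (length w) (length w) \<in> Qacc"
    if w: "w \<noteq> []" for w
  proof
    assume "w \<in> L"
    then show "oca_state \<delta> sh Inl w (length w) (length w) \<in> Qacc"
      unfolding Qacc_def using w state final_state by blast
  next
    assume "oca_state \<delta> sh Inl w (length w) (length w) \<in> Qacc"
    then obtain w' where "w' \<in> L" "F w' = F w"
      unfolding Qacc_def using state[OF w] by auto
    then show "w \<in> L"
      using saturated w nonempty by blast
  qed
  moreover have "Qacc \<subseteq> Q"
    unfolding Qacc_def by auto
  ultimately have "finite Q \<and> range Inl \<subseteq> Q \<and> sh \<notin> Q \<and> Qacc \<subseteq> Q \<and>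
      (\<forall>q \<in> insert sh Q. \<forall>q' \<in> Q. \<delta> q q' \<in> Q) \<and>
      (\<forall>w. w \<noteq> [] \<longrightarrow> (w \<in> L \<longleftrightarrow> oca_state \<delta> sh Inl w (length w) (length w) \<in> Qacc))"
    using Q closed by blast
  then show ?thesis
    unfolding Trellis_def using nonempty by blast
qed

text \<open>The automaton stores summaries, enumerated by h.\<close>

lemma finite_summary_imp_Trellis:
  fixes L :: "('s::finite) list set" and F :: "'s list \<Rightarrow> 'd"
  assumes nonempty: "L \<subseteq> {w. w \<noteq> []}"
    and finite: "finite (F ` {u. u \<noteq> []})"
    and cong: "\<And>u u'. 2 \<le> length u \<Longrightarrow> 2 \<le> length u' \<Longrightarrow>
      F (butlast u) = F (butlast u') \<Longrightarrow> F (tl u) = F (tl u') \<Longrightarrow> F u = F u'"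
    and saturated: "\<And>w w'. w \<noteq> [] \<Longrightarrow> w' \<noteq> [] \<Longrightarrow> F w = F w' \<Longrightarrow> w \<in> L \<Longrightarrow> w' \<in> L"
  shows "L \<in> Trellis"
proof -
  define D where "D = F ` {u. u \<noteq> []}"
  define N where "N = card D"
  obtain h where h: "bij_betw h {0..<N} D"
    using ex_bij_betw_nat_finite[OF finite] unfolding D_def N_def by blast
  define enc where "enc = inv_into {0..<N} h"
  have enc: "d \<in> D \<Longrightarrow> enc d < N \<and> h (enc d) = d" for d
    unfolding enc_def using h
    by (metis atLeastLessThan_iff bij_betw_def bij_betw_inv_into_right inv_into_into)
  have "F [undefined] \<in> D"
    unfolding D_def by auto
  then have "0 < N"
    unfolding N_def D_def using finite card_gt_0_iff by blast
  define val where "val q = (case q of Inl a \<Rightarrow> F [a] | Inr i \<Rightarrow> h i)" for q :: "'s + nat"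
  define step where "step d e = F (SOME u. 2 \<le> length u \<and> F (butlast u) = d \<and> F (tl u) = e)"
    for d e
  define \<delta> :: "'s + nat \<Rightarrow> 's + nat \<Rightarrow> 's + nat"
    where "\<delta> p q = Inr (if step (val p) (val q) \<in> D then enc (step (val p) (val q)) else 0)" for p q
  define Q :: "('s + nat) set" where "Q = range Inl \<union> Inr ` {0..<N}"
  have "val (\<delta> p q) = F u"
    if u: "2 \<le> length u" "val p = F (butlast u)" "val q = F (tl u)" for u p q
  proof -
    have "\<exists>u'. 2 \<le> length u' \<and> F (butlast u') = F (butlast u) \<and> F (tl u') = F (tl u)"
      using u(1) by blast
    then have "step (val p) (val q) = F u"
      unfolding step_def u(2,3) by (rule someI2_ex) (use cong u(1) in blast)
    moreover have "F u \<in> D"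
      unfolding D_def using u(1) by auto
    ultimately show ?thesis
      unfolding \<delta>_def val_def using enc by simp
  qed
  then have state: "val (oca_state \<delta> (Inr N) Inl w (length w) (length w)) = F w" if "w \<noteq> []" for w
    using oca_state_summary[of val Inl F \<delta> "length w - 1" "length w" w "Inr N"] that
    unfolding val_def by simp
  have Q: "finite Q" "range Inl \<subseteq> Q" "Inr N \<notin> Q"
    and closed: "\<forall>q \<in> insert (Inr N) Q. \<forall>q' \<in> Q. \<delta> q q' \<in> Q"
    unfolding Q_def \<delta>_def using enc \<open>0 < N\<close> by auto
  show ?thesis
    by (rule Trellis_if_final_state_summary[where val=val, OF nonempty saturated Q closed state])
qed

section \<open>Simulating trellis automata by inclusion Horn formulas\<close>

lemma oca_state_Suc_diff:
  assumes "1 \<le> x" "x < y" "y \<le> length w"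
  shows "oca_state \<delta> sh inp w y (Suc (y - x)) =
    \<delta> (oca_state \<delta> sh inp w (y - 1) (Suc (y - 1 - x))) (oca_state \<delta> sh inp w y (Suc (y - (x + 1))))"
proof -
  have "Suc (y - x) = Suc (Suc (y - x - 1))" "y - 1 - x = y - x - 1" "y - (x + 1) = y - x - 1"
    using assms by auto
  then show ?thesis
    using assms by simp
qed

text \<open>A real-time OCA is simulated by a formula whose relation number code q holds at (x,y)
  iff q is the state of cell y at time y - x + 1, i.e. the state computed from w[x..y].\<close>

locale real_time_oca =
  fixes letters :: "('s::finite) list" and states :: "('s + nat) list"
    and Qacc :: "('s + nat) set" and sh :: "'s + nat" and \<delta> :: "'s + nat \<Rightarrow> 's + nat \<Rightarrow> 's + nat"
    and code :: "'s + nat \<Rightarrow> nat"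
  assumes letters: "set letters = UNIV"
    and Inl_states: "range Inl \<subseteq> set states"
    and closed: "\<forall>q \<in> insert sh (set states). \<forall>q' \<in> set states. \<delta> q q' \<in> set states"
    and code_inj: "inj_on code (set states)"
begin

abbreviation factor_state :: "'s list \<Rightarrow> nat \<Rightarrow> nat \<Rightarrow> 's + nat" where
  "factor_state w x y \<equiv> oca_state \<delta> sh Inl w y (Suc (y - x))"

definition init_clause :: "'s \<Rightarrow> 's hclause" where
  "init_clause s = ([XeqY, ULit True (Qs s) VX 0], HRel (code (Inl s)))"

definition step_clause :: "'s + nat \<Rightarrow> 's + nat \<Rightarrow> 's hclause" where
  "step_clause p q = ([XltY, RLit (code p) 0 1, RLit (code q) 1 0], HRel (code (\<delta> p q)))"

definition reject_clause :: "'s + nat \<Rightarrow> 's hclause" where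
  "reject_clause q = ([ULit True MinP VX 0, ULit True MaxP VY 0, RLit (code q) 0 0], HBot)"

definition oca_formula :: "'s incl_horn" where
  "oca_formula = map init_clause letters @ concat (map (\<lambda>p. map (step_clause p) states) states) @
     map reject_clause (filter (\<lambda>q. q \<notin> Qacc) states)"

lemma factor_state_in_states: "1 \<le> x \<Longrightarrow> x \<le> y \<Longrightarrow> y \<le> length w \<Longrightarrow> factor_state w x y \<in> set states"
  using oca_state_closed[OF closed Inl_states] by simp

lemma factor_state_step:
  "1 \<le> x \<Longrightarrow> x < y \<Longrightarrow> y \<le> length w \<Longrightarrow>
    factor_state w x y = \<delta> (factor_state w x (y - 1)) (factor_state w (x + 1) y)"
  using oca_state_Suc_diff[of x y w] by simp

lemma code_eq_iff: "p \<in> set states \<Longrightarrow> q \<in> set states \<Longrightarrow> code p = code q \<longleftrightarrow> p = q"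
  using code_inj by (meson inj_onD)

lemma rel_clause_cases:
  assumes "(ls, HRel R) \<in> set oca_formula"
  obtains s where "(ls, HRel R) = init_clause s"
  | p q where "p \<in> set states" "q \<in> set states" "(ls, HRel R) = step_clause p q"
  using assms unfolding oca_formula_def reject_clause_def by auto

lemma least_model_imp_factor_state:
  "least_model oca_formula w R x y \<Longrightarrow>
    1 \<le> x \<and> x \<le> y \<and> y \<le> length w \<and> R = code (factor_state w x y)"
proof (induction rule: least_model.induct)
  case (least_modelI ls R x y)
  from least_modelI.hyps(1) show ?case
  proof (cases rule: rel_clause_cases)
    case (1 s)
    then show ?thesis
      using least_modelI.hyps
      by (auto simp: init_clause_def body_guard_def shift_nonneg upred_holds_def)
  next
    case (2 p q)
    then have xy: "x < y" and R: "R = code (\<delta> p q)"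
      using least_modelI.hyps(5) by (auto simp: step_clause_def body_guard_def)
    have "code p = code (factor_state w x (y - 1))" "code q = code (factor_state w (x + 1) y)"
      using least_modelI.IH 2 least_modelI.hyps(2,4) xy
      by (auto simp: step_clause_def shift_nonneg minus_w_eq)
    moreover have "factor_state w x (y - 1) \<in> set states" "factor_state w (x + 1) y \<in> set states"
      by (intro factor_state_in_states; use least_modelI.hyps(2,4) xy in simp)+
    ultimately have "p = factor_state w x (y - 1)" "q = factor_state w (x + 1) y"
      using 2 code_eq_iff by blast+
    then have "R = code (factor_state w x y)"
      unfolding R using factor_state_step[OF _ xy] least_modelI.hyps(2,4) by metis
    then show ?thesis
      using least_modelI.hyps(2,4) xy by simp
  qed
qed

lemma factor_state_imp_least_model:
  "1 \<le> x \<Longrightarrow> x \<le> y \<Longrightarrow> y \<le> length w \<Longrightarrow> least_model oca_formula w (code (factor_state w x y)) x y"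
proof (induction "y - x" arbitrary: x y)
  case 0
  then have "x = y"
    by simp
  with 0 have "factor_state w x y = Inl (w ! (y - 1))"
    by simp
  moreover have "init_clause (w ! (y - 1)) \<in> set oca_formula"
    unfolding oca_formula_def using letters by simp
  ultimately show ?case
    unfolding init_clause_def
  proof (intro least_modelI)
    show "body_guard w x y [XeqY, ULit True (Qs (w ! (y - 1))) VX 0]"
      using 0 \<open>x = y\<close> by (simp add: body_guard_def shift_nonneg upred_holds_def)
  qed (use 0 in auto)
next
  case (Suc k)
  then have xy: "x < y"
    by simp
  define p where "p = factor_state w x (y - 1)"
  define q where "q = factor_state w (x + 1) y"
  have "p \<in> set states" "q \<in> set states"
    unfolding p_def q_def by (intro factor_state_in_states; use Suc.prems xy in simp)+
  then have "step_clause p q \<in> set oca_formula"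
    unfolding oca_formula_def by auto
  moreover have "least_model oca_formula w (code p) x (y - 1)"
    "least_model oca_formula w (code q) (x + 1) y"
    unfolding p_def q_def by (rule Suc.hyps; use Suc.hyps(2) Suc.prems xy in simp)+
  ultimately have "least_model oca_formula w (code (\<delta> p q)) x y"
    unfolding step_clause_def
  proof (intro least_modelI)
    show "body_guard w x y [XltY, RLit (code p) 0 1, RLit (code q) 1 0]"
      using Suc.prems xy by (simp add: body_guard_def shift_nonneg minus_w_eq)
  qed (use Suc.prems xy in \<open>auto simp: shift_nonneg minus_w_eq\<close>)
  then show ?case
    unfolding p_def q_def using factor_state_step[OF _ xy] Suc.prems by metis
qed

lemma least_model_iff:
  "least_model oca_formula w R x y \<longleftrightarrow>
    1 \<le> x \<and> x \<le> y \<and> y \<le> length w \<and> R = code (factor_state w x y)"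
  using least_model_imp_factor_state factor_state_imp_least_model by blast

lemma violation_iff:
  "violation oca_formula w x y \<longleftrightarrow> x = 1 \<and> y = length w \<and> 1 \<le> length w \<and> factor_state w x y \<notin> Qacc"
proof
  assume "violation oca_formula w x y"
  then obtain ls where v: "1 \<le> x" "x \<le> y" "y \<le> length w" "(ls, HBot) \<in> set oca_formula"
    "body_guard w x y ls" "body_rels (least_model oca_formula w) (length w) x y ls"
    unfolding violation_def by blast
  then obtain q where q: "q \<in> set states" "q \<notin> Qacc" "ls = fst (reject_clause q)"
    unfolding oca_formula_def init_clause_def step_clause_def reject_clause_def by auto
  then have "x = 1" "y = length w" "code q = code (factor_state w x y)"
    using v(1-3,5,6) least_model_iff
    by (auto simp: reject_clause_def body_guard_def body_rels_def shift_nonneg upred_holds_def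
      minus_w_def)
  then show "x = 1 \<and> y = length w \<and> 1 \<le> length w \<and> factor_state w x y \<notin> Qacc"
    using q v factor_state_in_states code_eq_iff by auto
next
  assume a: "x = 1 \<and> y = length w \<and> 1 \<le> length w \<and> factor_state w x y \<notin> Qacc"
  define ls where "ls = fst (reject_clause (factor_state w x y))"
  have "(ls, HBot) \<in> set oca_formula"
    unfolding oca_formula_def ls_def using a factor_state_in_states by (auto simp: reject_clause_def)
  moreover have "body_guard w x y ls" "body_rels (least_model oca_formula w) (length w) x y ls"
    using a by (auto simp: ls_def reject_clause_def body_guard_def body_rels_def shift_nonneg
      upred_holds_def minus_w_eq least_model_iff)
  ultimately show "violation oca_formula w x y"
    unfolding violation_def using a by auto
qed

lemma incl_horn_lang_oca_formula:
  "incl_horn_lang oca_formula = {w. w \<noteq> [] \<and> oca_state \<delta> sh Inl w (length w) (length w) \<in> Qacc}"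
proof -
  have "Suc (length w - 1) = length w" if "w \<noteq> []" for w :: "'s list"
    using that by simp
  then show ?thesis
    unfolding incl_horn_lang_def incl_horn_models_iff_no_violation violation_iff
    by (auto simp: Suc_le_eq)
qed

end

lemma Trellis_subset_incl_ESO_HORN: "Trellis \<subseteq> (incl_ESO_HORN :: ('s::finite) list set set)"
proof
  fix L :: "'s list set"
  assume "L \<in> Trellis"
  then obtain Q :: "('s + nat) set" and Qacc sh \<delta> where nonempty: "L \<subseteq> {w. w \<noteq> []}"
    and Q: "finite Q" "range Inl \<subseteq> Q" "\<forall>q \<in> insert sh Q. \<forall>q' \<in> Q. \<delta> q q' \<in> Q"
    and accept: "\<forall>w. w \<noteq> [] \<longrightarrow> (w \<in> L \<longleftrightarrow> oca_state \<delta> sh Inl w (length w) (length w) \<in> Qacc)"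
    unfolding Trellis_def mem_Collect_eq by (elim conjE exE) (rule that; assumption)
  obtain states where states: "set states = Q"
    using finite_list[OF Q(1)] by blast
  obtain letters :: "'s list" where letters: "set letters = UNIV"
    using finite_list[OF finite_UNIV] by blast
  obtain code :: "'s + nat \<Rightarrow> nat" where "inj_on code Q"
    using finite_imp_inj_to_nat_seg[OF Q(1)] by blast
  then interpret real_time_oca letters states Qacc sh \<delta> code
    using Q states letters by unfold_locales auto
  have "L = incl_horn_lang oca_formula"
    unfolding incl_horn_lang_oca_formula using nonempty accept by blast
  then show "L \<in> incl_ESO_HORN"
    unfolding incl_ESO_HORN_def by blast
qed

section \<open>Locality of inclusion Horn formulas\<close>

fun hlit_offset :: "'s hlit \<Rightarrow> nat" where
  "hlit_offset (ULit _ _ _ a) = nat \<bar>a\<bar>"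
| "hlit_offset (RLit _ a b) = max a b"
| "hlit_offset _ = 0"

definition offset_bound :: "'s incl_horn \<Rightarrow> nat" where
  "offset_bound \<Phi> = sum_list (map hlit_offset (concat (map fst \<Phi>)))"

lemma hlit_offset_le_offset_bound:
  assumes "(ls, h) \<in> set \<Phi>" "l \<in> set ls"
  shows "hlit_offset l \<le> offset_bound \<Phi>"
proof -
  have "hlit_offset l \<in> set (map hlit_offset (concat (map fst \<Phi>)))"
    using assms by force
  then show ?thesis
    unfolding offset_bound_def by (rule member_le_sum_list) simp
qed

lemma shift_drop_take:
  assumes "d < s" "s \<le> p" "p \<le> t" "t + e \<le> n" "d = 0 \<or> d + m + 1 < s" "e = 0 \<or> t + m + 1 + e \<le> n"
    and "nat \<bar>a\<bar> \<le> m"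
  shows "d < shift n p a \<and> shift n p a + e \<le> n \<and> shift (n - e - d) (p - d) a = shift n p a - d \<and>
    (d = 0 \<or> d + 2 \<le> shift n p a) \<and> (e = 0 \<or> shift n p a + e < n)"
proof (cases "0 \<le> a")
  case True
  have "shift n p a = min (p + nat a) n" "shift (n - e - d) (p - d) a = min (p - d + nat a) (n - e - d)"
    using assms True by (simp_all add: shift_nonneg)
  then show ?thesis
    using assms True by (simp only:) (auto simp: min_def)
next
  case False
  have shifts: "shift n p a = max (p - nat (- a)) 1"
    "shift (n - e - d) (p - d) a = max (p - d - nat (- a)) 1"
    using assms False by (simp_all add: shift_neg)
  show ?thesis
    unfolding shifts using assms False by (auto simp: max_def)
qed

lemma upred_holds_drop_take:
  assumes "d < q" "q + e \<le> length v" "d = 0 \<or> d + 2 \<le> q" "e = 0 \<or> q + e < length v"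
  shows "upred_holds v U q \<longleftrightarrow> upred_holds (drop d (take (length v - e) v)) U (q - d)"
proof -
  have "drop d (take (length v - e) v) ! (q - d - 1) = v ! (q - 1)"
    using assms(1,2) by (simp add: add.commute)
  with assms show ?thesis
    by (cases U) (auto simp: upred_holds_def)
qed

locale incl_horn_formula =
  fixes \<Phi> :: "('s::finite) incl_horn"
begin

abbreviation A :: nat where "A \<equiv> offset_bound \<Phi>"
abbreviation K :: nat where "K \<equiv> offset_bound \<Phi> + 1"

text \<open>A clause evaluated at positions in [s,t] only looks at letters less than K away from
  them.  Hence cutting d letters on the left and e letters on the right of v changes nothing
  about [s,t], as long as each cut is empty (so that min/max are unaffected) or leaves a margin
  of K.\<close>

definition margins :: "'s list \<Rightarrow> nat \<Rightarrow> nat \<Rightarrow> nat \<Rightarrow> nat \<Rightarrow> bool" where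
  "margins v d e s t \<longleftrightarrow> 1 \<le> s \<and> d < s \<and> s \<le> t \<and> t + e \<le> length v \<and>
     (d = 0 \<or> d + K < s) \<and> (e = 0 \<or> t + K + e \<le> length v)"

lemma shift_cut:
  assumes "margins v d e s t" "s \<le> p" "p \<le> t" "nat \<bar>a\<bar> \<le> A"
  defines "v' \<equiv> drop d (take (length v - e) v)"
  shows "d < shift (length v) p a" "shift (length v) p a + e \<le> length v"
    "shift (length v') (p - d) a = shift (length v) p a - d"
    "d = 0 \<or> d + 2 \<le> shift (length v) p a" "e = 0 \<or> shift (length v) p a + e < length v"
  using shift_drop_take[of d s p t e "length v" A a] assms
  by (auto simp: margins_def add.assoc)

lemma minus_w_cut:
  assumes "margins v d e s t" "s \<le> y" "y \<le> t" "b \<le> A"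
  defines "v' \<equiv> drop d (take (length v - e) v)"
  shows "minus_w (y - d) b = minus_w y b - d" "d < minus_w y b"
proof -
  have "minus_w y b = shift (length v) y (- int b)"
    by (rule minus_w_eq_shift) (use assms in \<open>auto simp: margins_def\<close>)
  moreover have "minus_w (y - d) b = shift (length v') (y - d) (- int b)"
    by (rule minus_w_eq_shift) (use assms in \<open>auto simp: margins_def\<close>)
  ultimately show "minus_w (y - d) b = minus_w y b - d" "d < minus_w y b"
    using shift_cut[OF assms(1-3), of "- int b"] assms(4) unfolding v'_def by auto
qed

lemma body_guard_cut:
  assumes m: "margins v d e s t" and xy: "s \<le> x" "x \<le> t" "s \<le> y" "y \<le> t"
    and C: "(ls, h) \<in> set \<Phi>"
  defines "v' \<equiv> drop d (take (length v - e) v)"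
  shows "body_guard v x y ls \<longleftrightarrow> body_guard v' (x - d) (y - d) ls"
proof -
  have upred: "upred_holds v U (shift (length v) p a) \<longleftrightarrow> upred_holds v' U (shift (length v') (p - d) a)"
    if "s \<le> p" "p \<le> t" "nat \<bar>a\<bar> \<le> A" for p a U
    using upred_holds_drop_take[of d "shift (length v) p a" e v U] shift_cut[OF m that]
    unfolding v'_def by auto
  have "hlit_holds v (\<lambda>_ _ _. True) x y l \<longleftrightarrow> hlit_holds v' (\<lambda>_ _ _. True) (x - d) (y - d) l"
    if l: "l \<in> set ls" for l
  proof -
    have offset: "hlit_offset l \<le> A"
      using hlit_offset_le_offset_bound[OF C l] .
    show ?thesis
    proof (cases l)
      case (ULit pos U z a)
      then show ?thesis
        using offset upred[of x a U] upred[of y a U] xy by (cases z) auto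
    next
      case (RLit S a b)
      then show ?thesis
        using offset shift_cut[OF m xy(1,2), of "int a"] minus_w_cut[OF m xy(3,4), of b]
        unfolding v'_def by auto
    qed (use xy m in \<open>auto simp: margins_def\<close>)
  qed
  then show ?thesis
    unfolding body_guard_def by blast
qed

lemma least_model_imp_cut:
  assumes m: "margins v d e s t" and xy: "s \<le> x" "x \<le> y" "y \<le> t"
    and lm: "least_model \<Phi> v R x y"
  defines "v' \<equiv> drop d (take (length v - e) v)"
  shows "least_model \<Phi> v' R (x - d) (y - d)"
proof (rule least_model_transfer[where P="{(x, y). s \<le> x \<and> x \<le> y \<and> y \<le> t}" and f="\<lambda>p. p - d"])
  show "least_model \<Phi> v R x y" "(x, y) \<in> {(x, y). s \<le> x \<and> x \<le> y \<and> y \<le> t}"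
    using lm xy by auto
  fix x y assume "(x, y) \<in> {(x, y). s \<le> x \<and> x \<le> y \<and> y \<le> t}"
  then have P: "s \<le> x" "x \<le> y" "y \<le> t"
    by auto
  show "1 \<le> x - d \<and> x - d \<le> y - d \<and> y - d \<le> length v'"
    using P m unfolding v'_def margins_def by auto
  fix ls h assume C: "(ls, h) \<in> set \<Phi>"
  show "body_guard v x y ls \<Longrightarrow> body_guard v' (x - d) (y - d) ls"
    using body_guard_cut[OF m P(1) _ _ P(3) C] P unfolding v'_def by auto
  fix S a b assume guard: "body_guard v x y ls" and R: "RLit S a b \<in> set ls"
  have "a \<le> A" "b \<le> A"
    using hlit_offset_le_offset_bound[OF C R] by auto
  then show "shift (length v') (x - d) (int a) = shift (length v) x (int a) - d \<and>
      minus_w (y - d) b = minus_w y b - d"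
    using shift_cut[OF m P(1), of "int a"] minus_w_cut[OF m _ P(3), of b] P
    unfolding v'_def by auto
  show "(shift (length v) x (int a), minus_w y b) \<notin> {(x, y). s \<le> x \<and> x \<le> y \<and> y \<le> t} \<Longrightarrow>
      least_model \<Phi> v S (shift (length v) x (int a)) (minus_w y b) \<Longrightarrow>
      least_model \<Phi> v' S (shift (length v) x (int a) - d) (minus_w y b - d)"
    using rel_atom_between[OF guard R] P m by (auto simp: margins_def)
qed

lemma least_model_cut_imp:
  assumes m: "margins v d e s t" and xy: "s \<le> x" "x \<le> y" "y \<le> t"
  defines "v' \<equiv> drop d (take (length v - e) v)"
  assumes lm: "least_model \<Phi> v' R (x - d) (y - d)"
  shows "least_model \<Phi> v R x y"
proof -
  have "least_model \<Phi> v R (x - d + d) (y - d + d)"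
  proof (rule least_model_transfer[where P="{(x, y). s - d \<le> x \<and> x \<le> y \<and> y \<le> t - d}" and f="\<lambda>p. p + d"])
    show "least_model \<Phi> v' R (x - d) (y - d)" "(x - d, y - d) \<in> {(x, y). s - d \<le> x \<and> x \<le> y \<and> y \<le> t - d}"
      using lm xy by auto
    fix x y assume "(x, y) \<in> {(x, y). s - d \<le> x \<and> x \<le> y \<and> y \<le> t - d}"
    then have P: "s \<le> x + d" "x + d \<le> y + d" "y + d \<le> t" "s - d \<le> x" "y \<le> t - d"
      using m by (auto simp: margins_def)
    show "1 \<le> x + d \<and> x + d \<le> y + d \<and> y + d \<le> length v"
      using P m by (auto simp: margins_def)
    fix ls h assume C: "(ls, h) \<in> set \<Phi>"
    show "body_guard v' x y ls \<Longrightarrow> body_guard v (x + d) (y + d) ls"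
      using body_guard_cut[OF m P(1) _ _ P(3) C] P unfolding v'_def by auto
    fix S a b assume guard: "body_guard v' x y ls" and R: "RLit S a b \<in> set ls"
    have "a \<le> A" "b \<le> A"
      using hlit_offset_le_offset_bound[OF C R] by auto
    then have W: "shift (length v') x (int a) = shift (length v) (x + d) (int a) - d"
      "minus_w y b = minus_w (y + d) b - d"
      "d < shift (length v) (x + d) (int a)" "d < minus_w (y + d) b"
      using shift_cut[OF m P(1), of "int a"] minus_w_cut[OF m _ P(3), of b] P
      unfolding v'_def by auto
    then show "shift (length v) (x + d) (int a) = shift (length v') x (int a) + d \<and>
        minus_w (y + d) b = minus_w y b + d"
      by auto
    have "y \<le> length v'"
      using m P unfolding v'_def margins_def by auto
    then show "(shift (length v') x (int a), minus_w y b) \<notin> {(x, y). s - d \<le> x \<and> x \<le> y \<and> y \<le> t - d} \<Longrightarrow>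
        least_model \<Phi> v' S (shift (length v') x (int a)) (minus_w y b) \<Longrightarrow>
        least_model \<Phi> v S (shift (length v') x (int a) + d) (minus_w y b + d)"
      using rel_atom_between[OF guard R] P m by (auto simp: margins_def)
  qed
  then show ?thesis
    using xy m by (simp add: margins_def)
qed

lemma least_model_cut_iff:
  assumes "margins v d e s t" "s \<le> x" "x \<le> y" "y \<le> t"
  shows "least_model \<Phi> v R x y \<longleftrightarrow> least_model \<Phi> (drop d (take (length v - e) v)) R (x - d) (y - d)"
  using least_model_imp_cut least_model_cut_imp assms by blast

lemma violation_cut_iff:
  assumes m: "margins v d e s t" and xy: "s \<le> x" "x \<le> y" "y \<le> t"
  defines "v' \<equiv> drop d (take (length v - e) v)"
  shows "violation \<Phi> v x y \<longleftrightarrow> violation \<Phi> v' (x - d) (y - d)"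
proof -
  have rels: "body_rels (least_model \<Phi> v) (length v) x y ls \<longleftrightarrow>
      body_rels (least_model \<Phi> v') (length v') (x - d) (y - d) ls"
    if C: "(ls, HBot) \<in> set \<Phi>" and guard: "body_guard v x y ls" for ls
  proof -
    have "least_model \<Phi> v S (shift (length v) x (int a)) (minus_w y b) \<longleftrightarrow>
        least_model \<Phi> v' S (shift (length v') (x - d) (int a)) (minus_w (y - d) b)"
      if R: "RLit S a b \<in> set ls" for S a b
    proof -
      have "a \<le> A" "b \<le> A"
        using hlit_offset_le_offset_bound[OF C R] by auto
      then have "shift (length v') (x - d) (int a) = shift (length v) x (int a) - d"
        "minus_w (y - d) b = minus_w y b - d"
        using shift_cut[OF m xy(1), of "int a"] minus_w_cut[OF m _ xy(3), of b] xy
        unfolding v'_def by auto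
      then show ?thesis
        using rel_atom_between[OF guard R] least_model_cut_iff[OF m] xy m
        unfolding v'_def by (auto simp: margins_def)
    qed
    then show ?thesis
      unfolding body_rels_def by blast
  qed
  have "length v' = length v - e - d"
    using m unfolding v'_def margins_def by auto
  then show ?thesis
    unfolding violation_def using body_guard_cut[OF m xy(1) _ _ xy(3)] rels xy m
    unfolding v'_def by (auto simp: margins_def)
qed

section \<open>Summaries of factors\<close>

definition ends :: "'s list \<Rightarrow> 's list + 's list \<times> 's list" where
  "ends u = (if length u \<le> 2 * K + 2 then Inl u else Inr (take K u, take K (rev u)))"

definition derived :: "'s list \<Rightarrow> ('s list \<times> 's list \<times> nat \<times> nat \<times> nat) set" where
  "derived u = {(l, r, R, i, j). length l \<le> K \<and> length r \<le> K \<and> i \<le> A \<and> j \<le> A \<and> i + j < length u \<and>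
      least_model \<Phi> (l @ u @ r) R (length l + 1 + i) (length l + length u - j)}"

definition violated :: "'s list \<Rightarrow> ('s list \<times> 's list) set" where
  "violated u = {(l, r). length l \<le> K \<and> length r \<le> K \<and>
      (\<exists>x y. length l < x \<and> y \<le> length l + length u \<and> violation \<Phi> (l @ u @ r) x y)}"

definition summary :: "'s list \<Rightarrow> ('s list + 's list \<times> 's list) \<times>
    ('s list \<times> 's list \<times> nat \<times> nat \<times> nat) set \<times> ('s list \<times> 's list) set" where
  "summary u = (ends u, derived u, violated u)"

lemma butlast_margins:
  assumes "2 \<le> length u"
  obtains e where "margins (l @ u @ r) 0 e (length l + 1) (length l + length u - 1)"
    "drop 0 (take (length (l @ u @ r) - e) (l @ u @ r)) = l @ butlast u @ take K (last u # r)"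
proof
  define e where "e = length r + 1 - min K (length r + 1)"
  have "u = butlast u @ [last u]"
    using assms by (intro append_butlast_last_id[symmetric]) auto
  then have u: "l @ u @ r = l @ butlast u @ (last u # r)"
    by (metis append.assoc append_Cons append_Nil)
  have "length (l @ u @ r) - e = length l + length (butlast u) + min K (length r + 1)"
    unfolding e_def using assms by auto
  moreover have "take (min A (length r)) r = take A r"
    by (simp add: min_def)
  ultimately show "drop 0 (take (length (l @ u @ r) - e) (l @ u @ r)) = l @ butlast u @ take K (last u # r)"
    unfolding u by (simp add: take_append)
  show "margins (l @ u @ r) 0 e (length l + 1) (length l + length u - 1)"
    unfolding margins_def e_def using assms by auto
qed

lemma tl_margins:
  fixes l :: "'s list"
  assumes "2 \<le> length u"
  defines "d \<equiv> length l + 1 - K"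
  shows "margins (l @ u @ r) d 0 (length l + 2) (length l + length u)"
    "drop d (take (length (l @ u @ r) - 0) (l @ u @ r)) = drop d (l @ [hd u]) @ tl u @ r"
proof -
  show "margins (l @ u @ r) d 0 (length l + 2) (length l + length u)"
    unfolding margins_def d_def using assms by auto
  have "l @ u @ r = (l @ [hd u]) @ tl u @ r"
    using assms by (cases u) auto
  then show "drop d (take (length (l @ u @ r) - 0) (l @ u @ r)) = drop d (l @ [hd u]) @ tl u @ r"
    unfolding d_def by simp
qed

lemma violation_butlast_iff:
  assumes "2 \<le> length u" "length l < x" "x \<le> y" "y < length l + length u"
  shows "violation \<Phi> (l @ u @ r) x y \<longleftrightarrow> violation \<Phi> (l @ butlast u @ take K (last u # r)) x y"
proof -
  obtain e where m: "margins (l @ u @ r) 0 e (length l + 1) (length l + length u - 1)"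
    and cut: "drop 0 (take (length (l @ u @ r) - e) (l @ u @ r)) = l @ butlast u @ take K (last u # r)"
    using assms(1) by (rule butlast_margins)
  show ?thesis
    using violation_cut_iff[OF m, of x y] assms unfolding cut by simp
qed

lemma violation_tl_iff:
  fixes l :: "'s list"
  assumes "2 \<le> length u" "length l + 1 < x" "x \<le> y" "y \<le> length l + length u"
  defines "d \<equiv> length l + 1 - K"
  shows "violation \<Phi> (l @ u @ r) x y \<longleftrightarrow> violation \<Phi> (drop d (l @ [hd u]) @ tl u @ r) (x - d) (y - d)"
proof -
  have "violation \<Phi> (l @ u @ r) x y \<longleftrightarrow> violation \<Phi> (drop (length l + 1 - K)
      (take (length (l @ u @ r) - 0) (l @ u @ r))) (x - (length l + 1 - K)) (y - (length l + 1 - K))"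
    by (rule violation_cut_iff[OF tl_margins(1)[OF assms(1)]]) (use assms in auto)
  then show ?thesis
    unfolding d_def tl_margins(2)[OF assms(1)] .
qed

text \<open>The hypotheses of the inductive step of summary_cong for long words.\<close>

definition similar :: "'s list \<Rightarrow> 's list \<Rightarrow> bool" where
  "similar u u' \<longleftrightarrow> 2 * K + 2 < length (butlast u) \<and> 2 * K + 2 < length (butlast u') \<and>
     derived (butlast u) = derived (butlast u') \<and> derived (tl u) = derived (tl u') \<and>
     take K u = take K u' \<and> take K (rev u) = take K (rev u')"

lemma similar_sym: "similar u u' \<Longrightarrow> similar u' u"
  unfolding similar_def by simp

lemma similar_hd_last:
  assumes "similar u u'"
  shows "hd u = hd u'" "last u = last u'"
proof -
  have "hd (take K u) = hd (take K u')" "hd (take K (rev u)) = hd (take K (rev u'))"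
    using assms unfolding similar_def by simp_all
  then show "hd u = hd u'" "last u = last u'"
    using assms unfolding similar_def by (simp_all add: hd_rev)
qed

lemma least_model_iff_derived_butlast:
  assumes v: "2 * K + 2 < length (butlast v)" and lr: "length l \<le> K" "length r \<le> K"
    and ij: "i \<le> A" "j \<le> A" "1 \<le> j"
  shows "least_model \<Phi> (l @ v @ r) R (length l + 1 + i) (length l + length v - j) \<longleftrightarrow>
    (l, take K (last v # r), R, i, j - 1) \<in> derived (butlast v)"
proof -
  from v have "2 \<le> length v"
    by simp
  then obtain e where m: "margins (l @ v @ r) 0 e (length l + 1) (length l + length v - 1)"
    and cut: "drop 0 (take (length (l @ v @ r) - e) (l @ v @ r)) = l @ butlast v @ take K (last v # r)"
    by (rule butlast_margins)
  have "length l + 1 + i \<le> length l + length v - j" "length l + length v - j \<le> length l + length v - 1"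
    "length l + length (butlast v) - (j - 1) = length l + length v - j"
    "j - 1 \<le> A" "i + (j - 1) < length (butlast v)"
    using v ij by auto
  then show ?thesis
    using least_model_cut_iff[OF m, of "length l + 1 + i" "length l + length v - j" R] v lr ij
    unfolding cut derived_def by simp
qed

lemma least_model_iff_derived_tl:
  fixes l :: "'s list"
  assumes v: "2 * K + 2 < length (butlast v)" and lr: "length l \<le> K" "length r \<le> K"
    and i: "1 \<le> i" "i \<le> A"
  defines "l' \<equiv> drop (length l + 1 - K) (l @ [hd v])"
  shows "least_model \<Phi> (l @ v @ r) R (length l + 1 + i) (length l + length v) \<longleftrightarrow>
    (l', r, R, i - 1, 0) \<in> derived (tl v)"
proof -
  define d where "d = length l + 1 - K"
  have l': "length l' \<le> K" "length l' + d = length l + 1"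
    unfolding l'_def d_def by auto
  have m: "margins (l @ v @ r) d 0 (length l + 2) (length l + length v)"
    and cut: "drop d (take (length (l @ v @ r) - 0) (l @ v @ r)) = l' @ tl v @ r"
    using tl_margins[of v l r] v unfolding l'_def d_def by auto
  have "length l + 2 \<le> length l + 1 + i" "length l + 1 + i \<le> length l + length v"
    "length l + 1 + i - d = length l' + 1 + (i - 1)"
    "length l + length v - d = length l' + length (tl v) - 0"
    "i - 1 \<le> A" "i - 1 + 0 < length (tl v)"
    using l' i v by auto
  then show ?thesis
    using least_model_cut_iff[OF m, of "length l + 1 + i" "length l + length v" R] lr l'(1)
    unfolding cut derived_def by simp
qed

text \<open>Facts with one end strictly inside u are facts about butlast u or tl u in a context of
  length at most K, and are therefore recorded in the summaries of these two factors.\<close>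

lemma least_model_inner_transfer:
  assumes sim: "similar u u'" and lr: "length l \<le> K" "length r \<le> K"
    and ij: "i \<le> A" "j \<le> A" "(i, j) \<noteq> (0, 0)"
    and lm: "least_model \<Phi> (l @ u @ r) R (length l + 1 + i) (length l + length u - j)"
  shows "least_model \<Phi> (l @ u' @ r) R (length l + 1 + i) (length l + length u' - j)"
proof -
  have lu: "2 * K + 2 < length (butlast u)" "2 * K + 2 < length (butlast u')"
    using sim unfolding similar_def by auto
  show ?thesis
  proof (cases "1 \<le> j")
    case True
    then show ?thesis
      using least_model_iff_derived_butlast[OF lu(1) lr ij(1,2) True, of R]
        least_model_iff_derived_butlast[OF lu(2) lr ij(1,2) True, of R] lm sim similar_hd_last[OF sim]
      unfolding similar_def by simp
  next
    case False
    then have "j = 0" "1 \<le> i"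
      using ij by auto
    then show ?thesis
      using least_model_iff_derived_tl[OF lu(1) lr \<open>1 \<le> i\<close> ij(1), of R]
        least_model_iff_derived_tl[OF lu(2) lr \<open>1 \<le> i\<close> ij(1), of R] lm sim similar_hd_last[OF sim]
      unfolding similar_def by simp
  qed
qed

lemma upred_holds_cong:
  assumes "v ! (q - 1) = v' ! (q' - 1)" "q = 1 \<longleftrightarrow> q' = 1" "q = length v \<longleftrightarrow> q' = length v'"
  shows "upred_holds v U q \<longleftrightarrow> upred_holds v' U q'"
  using assms by (cases U) (auto simp: upred_holds_def)

lemma left_end_shift:
  fixes l r :: "'s list"
  assumes lu: "2 * K + 2 < length u" "2 * K + 2 < length u'" and tk: "take K u = take K u'"
    and a: "nat \<bar>a\<bar> \<le> A"
  defines "q \<equiv> shift (length (l @ u @ r)) (length l + 1) a"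
  shows "shift (length (l @ u' @ r)) (length l + 1) a = q" "q \<le> length l + K"
    and "upred_holds (l @ u @ r) U q \<longleftrightarrow> upred_holds (l @ u' @ r) U q"
proof -
  have num: "shift (length (l @ u' @ r)) (length l + 1) a = q \<and> 1 \<le> q \<and>
      q \<le> length l + K \<and> q < length (l @ u @ r) \<and> q < length (l @ u' @ r)"
  proof (cases "0 \<le> a")
    case True
    then have "q = length l + 1 + nat a" "shift (length (l @ u' @ r)) (length l + 1) a = length l + 1 + nat a"
      unfolding q_def using lu a by (simp_all add: shift_nonneg)
    then show ?thesis
      using lu a True by auto
  next
    case False
    then have "q = max (length l + 1 - nat (- a)) 1"
      "shift (length (l @ u' @ r)) (length l + 1) a = max (length l + 1 - nat (- a)) 1"
      unfolding q_def by (simp_all add: shift_neg)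
    then show ?thesis
      using lu a False by (auto simp: max_def)
  qed
  then show "shift (length (l @ u' @ r)) (length l + 1) a = q" "q \<le> length l + K"
    by simp_all
  have "take (length l + K) (l @ u @ r) = take (length l + K) (l @ u' @ r)"
    using lu tk by (simp add: take_append)
  then have "(l @ u @ r) ! (q - 1) = (l @ u' @ r) ! (q - 1)"
    using num by (metis diff_less less_le_trans nth_take zero_less_one)
  then show "upred_holds (l @ u @ r) U q \<longleftrightarrow> upred_holds (l @ u' @ r) U q"
    using num by (intro upred_holds_cong) auto
qed

lemma right_end_shift:
  fixes l r :: "'s list"
  assumes lu: "2 * K + 2 < length u" "2 * K + 2 < length u'" and tk: "take K (rev u) = take K (rev u')"
    and a: "nat \<bar>a\<bar> \<le> A"
  defines "q \<equiv> shift (length (l @ u @ r)) (length l + length u) a"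
    and "q' \<equiv> shift (length (l @ u' @ r)) (length l + length u') a"
  shows "q' + length u = q + length u'" "length l + K < q" "length l + K < q'"
    and "upred_holds (l @ u @ r) U q \<longleftrightarrow> upred_holds (l @ u' @ r) U q'"
proof -
  have num: "q' + length u = q + length u' \<and> length l + K < q \<and> length l + K < q' \<and>
      q \<le> length (l @ u @ r) \<and> q' \<le> length (l @ u' @ r) \<and> length (l @ u @ r) - q < length r + K \<and>
      length (l @ u @ r) - q = length (l @ u' @ r) - q'"
  proof (cases "0 \<le> a")
    case True
    then have "q = length l + length u + min (nat a) (length r)"
      "q' = length l + length u' + min (nat a) (length r)"
      unfolding q_def q'_def by (simp_all add: shift_nonneg)
    then show ?thesis
      using lu a True by (auto simp: min_def)
  next
    case False
    then have "q = length l + length u - nat (- a)" "q' = length l + length u' - nat (- a)"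
      unfolding q_def q'_def using lu a by (simp_all add: shift_neg max_def)
    then show ?thesis
      using lu a False by auto
  qed
  then show "q' + length u = q + length u'" "length l + K < q" "length l + K < q'"
    by simp_all
  have tr: "take (length r + K) (rev (l @ u @ r)) = take (length r + K) (rev (l @ u' @ r))"
    using lu tk by (simp add: take_append)
  define m where "m = length (l @ u @ r) - q"
  have m: "m < length (l @ u @ r)" "length (l @ u @ r) - Suc m = q - 1"
    "m < length (l @ u' @ r)" "length (l @ u' @ r) - Suc m = q' - 1" "m < length r + K"
    using num unfolding m_def by auto
  have "(l @ u @ r) ! (q - 1) = rev (l @ u @ r) ! m"
    using rev_nth[OF m(1)] m(2) by simp
  also have "\<dots> = take (length r + K) (rev (l @ u @ r)) ! m"
    by (rule nth_take[symmetric]) (use m(5) in simp)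
  also have "\<dots> = take (length r + K) (rev (l @ u' @ r)) ! m"
    using tr by simp
  also have "\<dots> = rev (l @ u' @ r) ! m"
    by (rule nth_take) (use m(5) in simp)
  also have "\<dots> = (l @ u' @ r) ! (q' - 1)"
    using rev_nth[OF m(3)] m(4) by simp
  finally show "upred_holds (l @ u @ r) U q \<longleftrightarrow> upred_holds (l @ u' @ r) U q'"
    using num lu by (intro upred_holds_cong) auto
qed

lemma end_positions:
  assumes "2 * K + 2 < length v" "a \<le> A" "b \<le> A"
  shows "shift (length (l @ v @ r)) (length l + 1) (int a) = length l + 1 + a"
    "minus_w (length l + length v) b = length l + length v - b"
  using assms by (simp_all add: shift_nonneg minus_w_eq)

lemma body_guard_full_span:
  assumes sim: "similar u u'" and C: "(ls, h) \<in> set \<Phi>"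
    and guard: "body_guard (l @ u @ r) (length l + 1) (length l + length u) ls"
  shows "body_guard (l @ u' @ r) (length l + 1) (length l + length u') ls"
proof -
  have lu: "2 * K + 2 < length u" "2 * K + 2 < length u'"
    and tk: "take K u = take K u'" "take K (rev u) = take K (rev u')"
    using sim unfolding similar_def by auto
  note left = left_end_shift[OF lu tk(1), where l=l and r=r]
    and right = right_end_shift[OF lu tk(2), where l=l and r=r]
  have minus_w: "minus_w (length l + length v) b = shift (length (l @ v @ r)) (length l + length v) (- int b)"
    if "2 * K + 2 < length v" for v b
    by (rule minus_w_eq_shift) (use that in auto)
  have "hlit_holds (l @ u @ r) (\<lambda>_ _ _. True) (length l + 1) (length l + length u) lt \<longleftrightarrow>
      hlit_holds (l @ u' @ r) (\<lambda>_ _ _. True) (length l + 1) (length l + length u') lt"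
    if lt: "lt \<in> set ls" for lt
  proof -
    have offset: "hlit_offset lt \<le> A"
      using hlit_offset_le_offset_bound[OF C lt] .
    show ?thesis
    proof (cases lt)
      case (ULit pos U z a)
      then show ?thesis
        using offset left[where a=a] right[where a=a] by (cases z) auto
    next
      case (RLit S a b)
      then show ?thesis
        using offset left[where a="int a"] right[where a="- int b"] minus_w[OF lu(1)] minus_w[OF lu(2)]
        by auto
    qed (use lu in auto)
  qed
  then show ?thesis
    using guard unfolding body_guard_def by blast
qed

text \<open>A fact about the full span of u either comes from a clause whose relation atoms are
  again full-span facts, or from inner facts; the transfer therefore goes through
  least_model_transfer with the single pair of the full span as the region.\<close>

lemma least_model_full_span_transfer:
  assumes sim: "similar u u'" and lr: "length l \<le> K" "length r \<le> K"
    and lm: "least_model \<Phi> (l @ u @ r) R (length l + 1) (length l + length u)"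
  shows "least_model \<Phi> (l @ u' @ r) R (length l + 1) (length l + length u')"
proof -
  have lu: "2 * K + 2 < length u" "2 * K + 2 < length u'"
    using sim unfolding similar_def by auto
  define f where "f p = (if p \<le> length l + K then p else p + length u' - length u)" for p
  have f: "f (length l + 1) = length l + 1" "f (length l + length u) = length l + length u'"
    unfolding f_def using lu by auto
  have "least_model \<Phi> (l @ u' @ r) R (f (length l + 1)) (f (length l + length u))"
  proof (rule least_model_transfer[where P="{(length l + 1, length l + length u)}" and f=f])
    show "least_model \<Phi> (l @ u @ r) R (length l + 1) (length l + length u)"
      "(length l + 1, length l + length u) \<in> {(length l + 1, length l + length u)}"
      using lm by auto
    fix x y assume "(x, y) \<in> {(length l + 1, length l + length u)}"
    then have x: "x = length l + 1" and y: "y = length l + length u"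
      by auto
    show "1 \<le> f x \<and> f x \<le> f y \<and> f y \<le> length (l @ u' @ r)"
      unfolding x y f using lu by simp
    fix ls h assume C: "(ls, h) \<in> set \<Phi>"
    show "body_guard (l @ u @ r) x y ls \<Longrightarrow> body_guard (l @ u' @ r) (f x) (f y) ls"
      unfolding x y f using body_guard_full_span[OF sim C] by blast
    fix S a b assume R: "RLit S a b \<in> set ls"
    have ab: "a \<le> A" "b \<le> A"
      using hlit_offset_le_offset_bound[OF C R] by auto
    have f_pos: "f (length l + 1 + a) = length l + 1 + a" "f (length l + length u - b) = length l + length u' - b"
      unfolding f_def using ab lu by auto
    then show "shift (length (l @ u' @ r)) (f x) (int a) = f (shift (length (l @ u @ r)) x (int a)) \<and>
        minus_w (f y) b = f (minus_w y b)"
      unfolding x y f end_positions[OF lu(1) ab] end_positions[OF lu(2) ab] by simp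
    show "(shift (length (l @ u @ r)) x (int a), minus_w y b) \<notin> {(length l + 1, length l + length u)} \<Longrightarrow>
        least_model \<Phi> (l @ u @ r) S (shift (length (l @ u @ r)) x (int a)) (minus_w y b) \<Longrightarrow>
        least_model \<Phi> (l @ u' @ r) S (f (shift (length (l @ u @ r)) x (int a))) (f (minus_w y b))"
    proof (unfold x y end_positions[OF lu(1) ab] f_pos)
      assume "(length l + 1 + a, length l + length u - b) \<notin> {(length l + 1, length l + length u)}"
      then have "(a, b) \<noteq> (0, 0)"
        by auto
      then show "least_model \<Phi> (l @ u @ r) S (length l + 1 + a) (length l + length u - b) \<Longrightarrow>
          least_model \<Phi> (l @ u' @ r) S (length l + 1 + a) (length l + length u' - b)"
        by (rule least_model_inner_transfer[OF sim lr ab])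
    qed
  qed
  then show ?thesis
    unfolding f .
qed

lemma least_model_ends_transfer:
  assumes "similar u u'" "length l \<le> K" "length r \<le> K" "i \<le> A" "j \<le> A"
    and "least_model \<Phi> (l @ u @ r) R (length l + 1 + i) (length l + length u - j)"
  shows "least_model \<Phi> (l @ u' @ r) R (length l + 1 + i) (length l + length u' - j)"
  using assms least_model_inner_transfer[OF assms(1-5)] least_model_full_span_transfer[OF assms(1-3)]
  by (cases "(i, j) = (0, 0)") auto

lemma derived_subset:
  assumes sim: "similar u u'"
  shows "derived u \<subseteq> derived u'"
proof
  fix z assume "z \<in> derived u"
  then obtain l r R i j where z: "z = (l, r, R, i, j)" and lr: "length l \<le> K" "length r \<le> K"
    and ij: "i \<le> A" "j \<le> A"
    and lm: "least_model \<Phi> (l @ u @ r) R (length l + 1 + i) (length l + length u - j)"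
    unfolding derived_def by blast
  then show "z \<in> derived u'"
    using least_model_ends_transfer[OF sim lr ij lm] sim unfolding derived_def similar_def by auto
qed

lemma violation_full_span_transfer:
  assumes sim: "similar u u'" and lr: "length l \<le> K" "length r \<le> K"
    and vi: "violation \<Phi> (l @ u @ r) (length l + 1) (length l + length u)"
  shows "violation \<Phi> (l @ u' @ r) (length l + 1) (length l + length u')"
proof -
  have lu: "2 * K + 2 < length u" "2 * K + 2 < length u'"
    using sim unfolding similar_def by auto
  obtain ls where C: "(ls, HBot) \<in> set \<Phi>"
    and guard: "body_guard (l @ u @ r) (length l + 1) (length l + length u) ls"
    and rels: "body_rels (least_model \<Phi> (l @ u @ r)) (length (l @ u @ r)) (length l + 1) (length l + length u) ls"
    using vi unfolding violation_def by blast
  have "body_rels (least_model \<Phi> (l @ u' @ r)) (length (l @ u' @ r)) (length l + 1) (length l + length u') ls"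
    unfolding body_rels_def
  proof (intro allI impI)
    fix S a b assume R: "RLit S a b \<in> set ls"
    have ab: "a \<le> A" "b \<le> A"
      using hlit_offset_le_offset_bound[OF C R] by auto
    have "least_model \<Phi> (l @ u @ r) S (shift (length (l @ u @ r)) (length l + 1) (int a))
        (minus_w (length l + length u) b)"
      using rels R unfolding body_rels_def by blast
    then have "least_model \<Phi> (l @ u @ r) S (length l + 1 + a) (length l + length u - b)"
      unfolding end_positions[OF lu(1) ab] .
    then show "least_model \<Phi> (l @ u' @ r) S (shift (length (l @ u' @ r)) (length l + 1) (int a))
        (minus_w (length l + length u') b)"
      unfolding end_positions[OF lu(2) ab] by (rule least_model_ends_transfer[OF sim lr ab])
  qed
  then show ?thesis
    unfolding violation_def using C body_guard_full_span[OF sim C guard] lu by auto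
qed

lemma violation_init_transfer:
  assumes sim: "similar u u'" and VB: "violated (butlast u) = violated (butlast u')"
    and lr: "length l \<le> K" "length r \<le> K"
    and xy: "length l < x" "x \<le> y" "y < length l + length u" and vi: "violation \<Phi> (l @ u @ r) x y"
  shows "\<exists>x y. length l < x \<and> y \<le> length l + length u' \<and> violation \<Phi> (l @ u' @ r) x y"
proof -
  have lu: "2 * K + 2 < length (butlast u)" "2 * K + 2 < length (butlast u')"
    using sim unfolding similar_def by auto
  then have u2: "2 \<le> length u" "2 \<le> length u'"
    by auto
  define r' where "r' = take K (last u # r)"
  have "violation \<Phi> (l @ butlast u @ r') x y"
    using vi violation_butlast_iff[OF u2(1) xy, of r] unfolding r'_def by blast
  moreover have "y \<le> length l + length (butlast u)" "length r' \<le> K"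
    using xy lr unfolding r'_def by auto
  ultimately have "(l, r') \<in> violated (butlast u)"
    unfolding violated_def using xy(1) lr(1) by auto
  then have "(l, r') \<in> violated (butlast u')"
    using VB by simp
  then have "\<exists>x' y'. length l < x' \<and> y' \<le> length l + length (butlast u') \<and>
      violation \<Phi> (l @ butlast u' @ r') x' y'"
    unfolding violated_def by simp
  then obtain x' y' where xy': "length l < x'" "y' \<le> length l + length (butlast u')"
    and vi': "violation \<Phi> (l @ butlast u' @ r') x' y'"
    by blast
  have "x' \<le> y'"
    using violation_range[OF vi'] by simp
  moreover have "y' < length l + length u'"
    using xy'(2) lu by simp
  ultimately have "violation \<Phi> (l @ u' @ r) x' y'"
    using vi' violation_butlast_iff[OF u2(2) xy'(1), of y' r] similar_hd_last(2)[OF sim]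
    unfolding r'_def by simp
  then show ?thesis
    using xy'(1) \<open>y' < length l + length u'\<close> by (intro exI[of _ x'] exI[of _ y']) simp
qed

lemma violation_tail_transfer:
  assumes sim: "similar u u'" and VT: "violated (tl u) = violated (tl u')"
    and lr: "length l \<le> K" "length r \<le> K"
    and xy: "length l + 1 < x" "x \<le> y" "y \<le> length l + length u" and vi: "violation \<Phi> (l @ u @ r) x y"
  shows "\<exists>x y. length l < x \<and> y \<le> length l + length u' \<and> violation \<Phi> (l @ u' @ r) x y"
proof -
  have lu: "2 * K + 2 < length (butlast u)" "2 * K + 2 < length (butlast u')"
    using sim unfolding similar_def by auto
  then have u2: "2 \<le> length u" "2 \<le> length u'"
    by auto
  define d where "d = length l + 1 - K"
  define l' where "l' = drop d (l @ [hd u])"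
  have l': "length l' \<le> K" "length l' + d = length l + 1"
    unfolding l'_def d_def by auto
  have "violation \<Phi> (l' @ tl u @ r) (x - d) (y - d)"
    using vi violation_tl_iff[OF u2(1) xy, of r] unfolding l'_def d_def by blast
  moreover have "length l' < x - d" "y - d \<le> length l' + length (tl u)"
    using l' xy lu by auto
  ultimately have "(l', r) \<in> violated (tl u)"
    unfolding violated_def using l'(1) lr(2) by auto
  then have "(l', r) \<in> violated (tl u')"
    using VT by simp
  then have "\<exists>x' y'. length l' < x' \<and> y' \<le> length l' + length (tl u') \<and>
      violation \<Phi> (l' @ tl u' @ r) x' y'"
    unfolding violated_def by simp
  then obtain x' y' where xy': "length l' < x'" "y' \<le> length l' + length (tl u')"
    and vi': "violation \<Phi> (l' @ tl u' @ r) x' y'"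
    by blast
  have "x' \<le> y'"
    using violation_range[OF vi'] by simp
  moreover have "length l + 1 < x' + d" "y' + d \<le> length l + length u'"
    using xy' l' lu by auto
  ultimately have "violation \<Phi> (l @ u' @ r) (x' + d) (y' + d)"
    using vi' violation_tl_iff[OF u2(2), of l "x' + d" "y' + d" r] similar_hd_last(1)[OF sim]
    unfolding l'_def d_def by simp
  then show ?thesis
    using \<open>length l + 1 < x' + d\<close> \<open>y' + d \<le> length l + length u'\<close>
    by (intro exI[of _ "x' + d"] exI[of _ "y' + d"]) simp
qed

lemma violated_subset:
  assumes sim: "similar u u'"
    and VB: "violated (butlast u) = violated (butlast u')" and VT: "violated (tl u) = violated (tl u')"
  shows "violated u \<subseteq> violated u'"
proof
  fix z assume "z \<in> violated u"
  then obtain l r x y where z: "z = (l, r)" and lr: "length l \<le> K" "length r \<le> K"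
    and xy: "length l < x" "y \<le> length l + length u" and vi: "violation \<Phi> (l @ u @ r) x y"
    unfolding violated_def by blast
  have "x \<le> y"
    using violation_range[OF vi] by simp
  consider (init) "y < length l + length u" | (tail) "length l + 1 < x"
    | (span) "x = length l + 1" "y = length l + length u"
    using xy by linarith
  then have "\<exists>x y. length l < x \<and> y \<le> length l + length u' \<and> violation \<Phi> (l @ u' @ r) x y"
  proof cases
    case init
    then show ?thesis
      using violation_init_transfer[OF sim VB lr xy(1) \<open>x \<le> y\<close> _ vi] by blast
  next
    case tail
    then show ?thesis
      using violation_tail_transfer[OF sim VT lr _ \<open>x \<le> y\<close> xy(2) vi] by blast
  next
    case span
    then have "violation \<Phi> (l @ u' @ r) (length l + 1) (length l + length u')"
      using violation_full_span_transfer[OF sim lr] vi by simp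
    then show ?thesis
      by (intro exI[of _ "length l + 1"] exI[of _ "length l + length u'"]) simp
  qed
  then show "z \<in> violated u'"
    unfolding z violated_def using lr by auto
qed

lemma ends_eq_short:
  assumes u: "2 \<le> length u" and short: "length (butlast u) \<le> 2 * K + 2"
    and "ends (butlast u) = ends (butlast u')" "ends (tl u) = ends (tl u')"
  shows "u = u'"
proof -
  have eq: "butlast u' = butlast u" "tl u' = tl u"
    using assms unfolding ends_def by (auto split: if_splits)
  have snoc: "v = butlast v @ [last (tl v)]" if "2 \<le> length v" for v :: "'s list"
    using that by (cases v) (auto simp: last_tl)
  have "length (tl u') = length (tl u)"
    using eq(2) by simp
  then have "2 \<le> length u'"
    using u by simp
  then show ?thesis
    using snoc[OF u] snoc[of u'] eq by simp
qed

lemma similar_if_summary_eq: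
  assumes long: "2 * K + 2 < length (butlast u)"
    and B: "summary (butlast u) = summary (butlast u')" and T: "summary (tl u) = summary (tl u')"
  shows "similar u u'"
proof -
  have ends_eq: "ends (butlast u) = ends (butlast u')" "ends (tl u) = ends (tl u')"
    using B T unfolding summary_def by simp_all
  then have long': "2 * K + 2 < length (butlast u')"
    and take_butlast_eq: "take K (butlast u) = take K (butlast u')"
    using long unfolding ends_def by (auto split: if_splits)
  have take_tl_eq: "take K (rev (tl u)) = take K (rev (tl u'))"
    using ends_eq(2) long long' unfolding ends_def by (auto split: if_splits)
  have take_eqs: "take K (butlast v) = take K v" "take K (rev (tl v)) = take K (rev v)"
    if "2 * K + 2 < length (butlast v)" for v
    using that by (simp_all add: take_butlast flip: butlast_rev)
  have "take K u = take K u'" "take K (rev u) = take K (rev u')"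
    using take_butlast_eq take_tl_eq take_eqs[OF long] take_eqs[OF long'] by simp_all
  then show ?thesis
    unfolding similar_def using long long' B T unfolding summary_def by simp
qed

lemma summary_cong:
  assumes "2 \<le> length u" "2 \<le> length u'"
    and B: "summary (butlast u) = summary (butlast u')" and T: "summary (tl u) = summary (tl u')"
  shows "summary u = summary u'"
proof (cases "length (butlast u) \<le> 2 * K + 2")
  case True
  then show ?thesis
    using ends_eq_short[OF assms(1) True] B T unfolding summary_def by simp
next
  case False
  then have sim: "similar u u'"
    using similar_if_summary_eq B T by simp
  then have "ends u = ends u'"
    unfolding similar_def ends_def by auto
  moreover have "derived u = derived u'"
    using derived_subset[OF sim] derived_subset[OF similar_sym[OF sim]] by blast
  moreover have "violated u = violated u'"
    using violated_subset[OF sim] violated_subset[OF similar_sym[OF sim]] B T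
    unfolding summary_def by auto
  ultimately show ?thesis
    unfolding summary_def by simp
qed

lemma finite_range_summary: "finite (range summary)"
proof -
  define ctx where "ctx = {l :: 's list. length l \<le> K}"
  define rels where "rels = {R. \<exists>ls. (ls, HRel R) \<in> set \<Phi>}"
  have bounded: "finite {l :: 's list. length l \<le> n}" for n
    using finite_lists_length_le[OF finite_UNIV, of n] by simp
  have "rels \<subseteq> (\<lambda>C. case snd C of HRel R \<Rightarrow> R | HBot \<Rightarrow> 0) ` set \<Phi>"
    unfolding rels_def by force
  then have "finite rels"
    by (rule finite_subset) simp
  have "ends u \<in> Inl ` {u. length u \<le> 2 * K + 2} \<union> Inr ` (ctx \<times> ctx)" for u
    unfolding ends_def ctx_def by auto
  moreover have "derived u \<subseteq> ctx \<times> ctx \<times> rels \<times> {..A} \<times> {..A}" for u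
  proof
    fix z assume "z \<in> derived u"
    then obtain l r R i j where "z = (l, r, R, i, j)" "length l \<le> K" "length r \<le> K" "i \<le> A" "j \<le> A"
      "least_model \<Phi> (l @ u @ r) R (length l + 1 + i) (length l + length u - j)"
      unfolding derived_def by blast
    then show "z \<in> ctx \<times> ctx \<times> rels \<times> {..A} \<times> {..A}"
      unfolding ctx_def rels_def using least_model_head by blast
  qed
  moreover have "violated u \<subseteq> ctx \<times> ctx" for u
    unfolding violated_def ctx_def by auto
  ultimately have "range summary \<subseteq> (Inl ` {u. length u \<le> 2 * K + 2} \<union> Inr ` (ctx \<times> ctx)) \<times>
      Pow (ctx \<times> ctx \<times> rels \<times> {..A} \<times> {..A}) \<times> Pow (ctx \<times> ctx)"
    unfolding summary_def by blast
  moreover have "finite ctx"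
    unfolding ctx_def using bounded .
  ultimately show ?thesis
    using bounded \<open>finite rels\<close> by (simp add: finite_subset)
qed

lemma incl_horn_lang_eq: "incl_horn_lang \<Phi> = {w. w \<noteq> [] \<and> ([], []) \<notin> violated w}"
proof -
  have "([], []) \<in> violated w \<longleftrightarrow> (\<exists>x y. 0 < x \<and> y \<le> length w \<and> violation \<Phi> w x y)" for w
    unfolding violated_def by simp
  moreover have "violation \<Phi> w x y \<Longrightarrow> 0 < x \<and> y \<le> length w" for w x y
    using violation_range[of \<Phi> w x y] by simp
  ultimately show ?thesis
    unfolding incl_horn_lang_def incl_horn_models_iff_no_violation by blast
qed

lemma incl_horn_lang_in_Trellis: "incl_horn_lang \<Phi> \<in> Trellis"
proof (rule finite_summary_imp_Trellis[where F=summary])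
  show "incl_horn_lang \<Phi> \<subseteq> {w. w \<noteq> []}"
    unfolding incl_horn_lang_def by auto
  show "finite (summary ` {u. u \<noteq> []})"
    using finite_range_summary by (rule finite_subset[rotated]) auto
  show "summary u = summary u'"
    if "2 \<le> length u" "2 \<le> length u'" "summary (butlast u) = summary (butlast u')"
      "summary (tl u) = summary (tl u')" for u u'
    using summary_cong that .
  show "w' \<in> incl_horn_lang \<Phi>"
    if "w \<noteq> []" "w' \<noteq> []" "summary w = summary w'" "w \<in> incl_horn_lang \<Phi>" for w w'
    using that unfolding incl_horn_lang_eq summary_def by auto
qed

end

theorem theorem4:
  shows "(incl_ESO_HORN :: ('s::finite) list set set) = Trellis"
proof
  show "(incl_ESO_HORN :: 's list set set) \<subseteq> Trellis"
    unfolding incl_ESO_HORN_def using incl_horn_formula.incl_horn_lang_in_Trellis by blast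
  show "Trellis \<subseteq> (incl_ESO_HORN :: 's list set set)"
    by (rule Trellis_subset_incl_ESO_HORN)
qed

end
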